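(* Let $\kappa<0$ and let $S$ be a $\kappa$-cylindrical surface whose directrix $(x,z)$ is the solution of $x'=\cos\theta$, $z'=\sin\theta$, $\theta'=\kappa z$ with $x(0)=0$, $\theta(0)=0$, $z(0)=u_0<0$. Then $S$ is a graph over the horizontal plane $\Pi$ (i.e. the directrix is a graph $z=u(x)$ over the $x$-axis) if and only if $$-\sqrt{\frac2{-\kappa}}<u_0<0.$$ In that case the function $u=u(r;u_0)$ (so $z(s)=u(x(s))$) satisfies: (1) $u$ is periodic and defined on all of $\mathbb R$; (2) $u$ vanishes on an infinite discrete set of points; (3) the inflection points of $u$ are exactly its zeros; (4) $u_0\le u(r)\le -u_0$, the values $\pm u_0$ are attained, and the points where they are attained are exactly the critical points of $u$.
   Context: A $\kappa$-cylindrical surface ($\kappa\ne0$ constant) is a cylindrical ruled surface in $\mathbb R^3$ locally satisfying $\operatorname{div}\big(Du/\sqrt{1+|Du|^2}\big)=\kappa u$; it has horizontal rulings and is parametrized as $(x(s),t,z(s))$, with arc-length directrix $(x,z)$ and $\theta$ the angle between $\partial/\partial x$ and the directrix, satisfying the system above. As a graph, $u$ solves $\frac{d}{dr}\big(u'/\sqrt{1+u'^2}\big)=\kappa u$, $u(0)=u_0$, $u'(0)=0$. *)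

theory Defs
  imports "HOL-Analysis.Analysis"
begin

definition directrix_graph :: "(real \<Rightarrow> real) \<Rightarrow> (real \<Rightarrow> real) \<Rightarrow> bool" where
  "directrix_graph x z \<longleftrightarrow>
     inj x \<and> (\<exists>u. (\<forall>s. z s = u (x s)) \<and> (\<forall>s. u differentiable (at (x s))))"

definition inflection_point :: "(real \<Rightarrow> real) \<Rightarrow> real \<Rightarrow> bool" where
  "inflection_point f r \<longleftrightarrow>
     (\<exists>e>0. ((\<forall>t\<in>{r-e<..<r}. deriv (deriv f) t < 0) \<and> (\<forall>t\<in>{r<..<r+e}. deriv (deriv f) t > 0))
          \<or> ((\<forall>t\<in>{r-e<..<r}. deriv (deriv f) t > 0) \<and> (\<forall>t\<in>{r<..<r+e}. deriv (deriv f) t < 0)))"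

definition critical_point :: "(real \<Rightarrow> real) \<Rightarrow> real \<Rightarrow> bool" where
  "critical_point f r \<longleftrightarrow> f differentiable (at r) \<and> deriv f r = 0"

end

theory Submission
  imports Defs
begin

text \<open>Along the directrix the energy cos \<theta> + \<kappa> z^2 / 2 is conserved, so
  cos \<theta> = m - \<kappa> z^2 / 2 with m = 1 + \<kappa> u0^2 / 2, and |z| \<le> |u0|. While cos \<theta> > 0
  and z < 0, \<theta> increases, so z grows at least linearly and reaches 0, where cos \<theta> = m.
  Hence for m \<le> 0 the tangent becomes vertical and the directrix is not a graph. For m > 0
  we have x' = cos \<theta> \<ge> m, so x is a diffeomorphism of the line and u = z \<circ> x^-1
  satisfies u' = tan \<theta> and u'' = \<kappa> u / cos^3 \<theta>, whose sign is opposite to that of u.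
  Uniqueness for z' = sin \<theta>, \<theta>' = \<kappa> z (a Gronwall estimate) makes the solution odd about
  its first zero S and even about 2 S, where \<theta> vanishes again; hence it is 4 S-periodic.\<close>

section \<open>Uniqueness and symmetries of the directrix equation\<close>

lemma abs_sin_diff_le: "\<bar>sin a - sin b\<bar> \<le> \<bar>a - b\<bar>" for a b :: real
proof -
  have "\<bar>sin a - sin b\<bar> = 2 * \<bar>sin ((a - b) / 2)\<bar> * \<bar>cos ((a + b) / 2)\<bar>"
    by (simp add: sin_diff_sin abs_mult)
  also have "\<dots> \<le> 2 * \<bar>(a - b) / 2\<bar> * 1"
    by (intro mult_mono abs_sin_x_le_abs_x) auto
  finally show ?thesis by simp
qed

lemma DERIV_ge_imp_linear_lower_bound:
  fixes f f' :: "real \<Rightarrow> real"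
  assumes "a \<le> b"
    and "\<And>y. a \<le> y \<Longrightarrow> y \<le> b \<Longrightarrow> (f has_real_derivative f' y) (at y)"
    and "\<And>y. a \<le> y \<Longrightarrow> y \<le> b \<Longrightarrow> c \<le> f' y"
  shows "f a + c * (b - a) \<le> f b"
proof -
  have "f a - c * a \<le> f b - c * b"
  proof (rule DERIV_nonneg_imp_nondecreasing[OF \<open>a \<le> b\<close>])
    fix y assume y: "a \<le> y" "y \<le> b"
    have "((\<lambda>s. f s - c * s) has_real_derivative f' y - c) (at y)"
      by (auto intro!: derivative_eq_intros assms(2) y)
    then show "\<exists>d. ((\<lambda>s. f s - c * s) has_real_derivative d) (at y) \<and> 0 \<le> d"
      using assms(3)[OF y] by auto
  qed
  then show ?thesis by (simp add: algebra_simps)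
qed

lemma gronwall_zero_forward:
  fixes E E' :: "real \<Rightarrow> real"
  assumes deriv: "\<And>s. (E has_real_derivative E' s) (at s)"
    and bound: "\<And>s. \<bar>E' s\<bar> \<le> L * E s"
    and nonneg: "\<And>s. 0 \<le> E s" and "E a = 0" and "a \<le> s"
  shows "E s = 0"
proof -
  define F where "F s = E s * exp (- L * s)" for s
  have "F s \<le> F a"
  proof (rule DERIV_nonpos_imp_nonincreasing[OF \<open>a \<le> s\<close>])
    fix y
    have "(F has_real_derivative (E' y - L * E y) * exp (- L * y)) (at y)"
      unfolding F_def by (auto intro!: derivative_eq_intros deriv simp: algebra_simps)
    moreover have "(E' y - L * E y) * exp (- L * y) \<le> 0"
      using bound[of y] by (intro mult_nonpos_nonneg) auto
    ultimately show "\<exists>d. (F has_real_derivative d) (at y) \<and> d \<le> 0" by blast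
  qed
  then have "E s * exp (- L * s) \<le> 0" using \<open>E a = 0\<close> by (simp add: F_def)
  then show ?thesis using nonneg[of s] by (simp add: mult_le_0_iff)
qed

lemma gronwall_zero:
  fixes E E' :: "real \<Rightarrow> real"
  assumes deriv: "\<And>s. (E has_real_derivative E' s) (at s)"
    and bound: "\<And>s. \<bar>E' s\<bar> \<le> L * E s"
    and nonneg: "\<And>s. 0 \<le> E s" and "E a = 0"
  shows "E s = 0"
proof (cases "a \<le> s")
  case True
  then show ?thesis using gronwall_zero_forward assms by blast
next
  case False
  have "E (- (- s)) = 0"
  proof (rule gronwall_zero_forward
      [where E = "\<lambda>s. E (- s)" and E' = "\<lambda>s. - E' (- s)" and a = "- a"])
    show "((\<lambda>s. E (- s)) has_real_derivative - E' (- s')) (at s')" for s'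
      using DERIV_mirror[of E "E' (- s')" s'] deriv by simp
  qed (use assms False in auto)
  then show ?thesis by simp
qed

text \<open>The (z, \<theta>) part of the system is autonomous; x is recovered by integrating cos \<theta>.\<close>
definition directrix_ode :: "real \<Rightarrow> (real \<Rightarrow> real) \<Rightarrow> (real \<Rightarrow> real) \<Rightarrow> bool" where
  "directrix_ode \<kappa> z \<theta> \<longleftrightarrow>
     (\<forall>s. (z has_real_derivative sin (\<theta> s)) (at s))
   \<and> (\<forall>s. (\<theta> has_real_derivative \<kappa> * z s) (at s))"

lemma directrix_ode_unique:
  assumes ode1: "directrix_ode \<kappa> z1 \<theta>1" and ode2: "directrix_ode \<kappa> z2 \<theta>2"
    and "z1 a = z2 a" "\<theta>1 a = \<theta>2 a"
  shows "z1 s = z2 s \<and> \<theta>1 s = \<theta>2 s"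
proof -
  define E where "E s = (z1 s - z2 s)\<^sup>2 + (\<theta>1 s - \<theta>2 s)\<^sup>2" for s
  define E' where "E' s = 2 * (z1 s - z2 s) * (sin (\<theta>1 s) - sin (\<theta>2 s))
    + 2 * \<kappa> * (\<theta>1 s - \<theta>2 s) * (z1 s - z2 s)" for s
  have "E s = 0"
  proof (rule gronwall_zero[where E = E and E' = E' and a = a and L = "1 + \<bar>\<kappa>\<bar>"])
    show "(E has_real_derivative E' s) (at s)" for s
      using ode1 ode2 unfolding E_def E'_def directrix_ode_def
      by (auto intro!: derivative_eq_intros simp: algebra_simps)
    show "\<bar>E' s\<bar> \<le> (1 + \<bar>\<kappa>\<bar>) * E s" for s
    proof -
      define p where "p = \<bar>z1 s - z2 s\<bar>"
      define q where "q = \<bar>\<theta>1 s - \<theta>2 s\<bar>"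
      have "\<bar>E' s\<bar> \<le> 2 * p * \<bar>sin (\<theta>1 s) - sin (\<theta>2 s)\<bar> + 2 * \<bar>\<kappa>\<bar> * q * p"
        unfolding E'_def p_def q_def
        by (rule order_trans[OF abs_triangle_ineq]) (simp only: abs_mult abs_numeral order_refl)
      also have "\<dots> \<le> (1 + \<bar>\<kappa>\<bar>) * (2 * p * q)"
        using mult_left_mono[OF abs_sin_diff_le, of "2 * p" "\<theta>1 s" "\<theta>2 s"]
        by (simp add: p_def q_def algebra_simps)
      also have "\<dots> \<le> (1 + \<bar>\<kappa>\<bar>) * E s"
        using sum_squares_bound[of p q] by (intro mult_left_mono) (auto simp: E_def p_def q_def)
      finally show ?thesis .
    qed
  qed (use assms in \<open>auto simp: E_def\<close>)
  then show ?thesis by (simp add: E_def)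
qed

lemma DERIV_reflect:
  fixes f :: "real \<Rightarrow> real"
  assumes "(f has_real_derivative D) (at (c - s))"
  shows "((\<lambda>s. f (c - s)) has_real_derivative - D) (at s)"
proof -
  have "((\<lambda>s. c - s) has_real_derivative - 1) (at s)"
    by (auto intro!: derivative_eq_intros)
  from DERIV_chain2[of f D "\<lambda>s. c - s", OF assms this] show ?thesis by simp
qed

lemma directrix_ode_shift:
  assumes "directrix_ode \<kappa> z \<theta>"
  shows "directrix_ode \<kappa> (\<lambda>s. z (s + c)) (\<lambda>s. \<theta> (s + c))"
  using assms unfolding directrix_ode_def by (simp flip: DERIV_shift)

lemma directrix_ode_reflect_through_zero:
  assumes "directrix_ode \<kappa> z \<theta>"
  shows "directrix_ode \<kappa> (\<lambda>s. - z (c - s)) (\<lambda>s. \<theta> (c - s))"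
  using assms unfolding directrix_ode_def
  by (auto intro!: DERIV_reflect derivative_eq_intros)

lemma directrix_ode_reflect_through_vertex:
  assumes "directrix_ode \<kappa> z \<theta>"
  shows "directrix_ode \<kappa> (\<lambda>s. z (c - s)) (\<lambda>s. - \<theta> (c - s))"
  using assms unfolding directrix_ode_def
  by (auto intro!: DERIV_reflect derivative_eq_intros)

lemma directrix_ode_odd_about_zero:
  assumes "directrix_ode \<kappa> z \<theta>" "z c = 0"
  shows "z (2 * c - s) = - z s \<and> \<theta> (2 * c - s) = \<theta> s"
  using directrix_ode_unique
      [OF directrix_ode_reflect_through_zero[OF assms(1), of "2 * c"] assms(1), of c s] assms(2)
  by simp

lemma directrix_ode_even_about_vertex:
  assumes "directrix_ode \<kappa> z \<theta>" "\<theta> c = 0"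
  shows "z (2 * c - s) = z s \<and> \<theta> (2 * c - s) = - \<theta> s"
  using directrix_ode_unique
      [OF directrix_ode_reflect_through_vertex[OF assms(1), of "2 * c"] assms(1), of c s] assms(2)
  by simp

lemma directrix_ode_periodic:
  assumes "directrix_ode \<kappa> z \<theta>" "z b = z a" "\<theta> b = \<theta> a"
  shows "z (s + (b - a)) = z s \<and> \<theta> (s + (b - a)) = \<theta> s"
  using directrix_ode_unique[OF directrix_ode_shift[OF assms(1), of "b - a"] assms(1), of a s]
    assms(2,3)
  by simp

lemma neg_sqrt_less_iff:
  fixes k u :: real
  assumes "0 < k" "u < 0"
  shows "- sqrt (2 / k) < u \<longleftrightarrow> k / 2 * u\<^sup>2 < 1"
proof -
  have "- sqrt (2 / k) < u \<longleftrightarrow> sqrt (u\<^sup>2) < sqrt (2 / k)" using assms(2) by auto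
  also have "\<dots> \<longleftrightarrow> u\<^sup>2 < 2 / k" by (rule real_sqrt_less_iff)
  also have "\<dots> \<longleftrightarrow> k / 2 * u\<^sup>2 < 1" using assms(1) by (simp add: field_simps)
  finally show ?thesis .
qed

section \<open>Sign changes\<close>

definition sign_changes_at :: "(real \<Rightarrow> real) \<Rightarrow> real \<Rightarrow> bool" where
  "sign_changes_at f r \<longleftrightarrow>
     (\<exists>e>0. ((\<forall>t\<in>{r-e<..<r}. f t < 0) \<and> (\<forall>t\<in>{r<..<r+e}. f t > 0))
          \<or> ((\<forall>t\<in>{r-e<..<r}. f t > 0) \<and> (\<forall>t\<in>{r<..<r+e}. f t < 0)))"

lemma inflection_point_iff_sign_changes_at:
  "inflection_point f r \<longleftrightarrow> sign_changes_at (deriv (deriv f)) r"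
  by (simp add: inflection_point_def sign_changes_at_def)

lemma sign_changes_at_sgn_cong:
  assumes "\<And>t. sgn (f t) = sgn (g t)"
  shows "sign_changes_at f r \<longleftrightarrow> sign_changes_at g r"
proof -
  have "f t < 0 \<longleftrightarrow> g t < 0" "f t > 0 \<longleftrightarrow> g t > 0" for t
    using assms[of t] by (metis sgn_less, metis sgn_greater)
  then show ?thesis by (simp add: sign_changes_at_def)
qed

lemma sign_changes_at_uminus: "sign_changes_at (\<lambda>t. - f t) r \<longleftrightarrow> sign_changes_at f r"
  unfolding sign_changes_at_def by auto

lemma sign_changes_at_DERIV:
  assumes "(f has_real_derivative D) (at r)" "D \<noteq> 0" "f r = 0"
  shows "sign_changes_at f r"
proof -
  have pos: "sign_changes_at g r"
    if g': "(g has_real_derivative D') (at r)" "D' > 0" and "g r = 0" for g D'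
  proof -
    obtain d1 where "d1 > 0" and right: "\<And>h. 0 < h \<Longrightarrow> h < d1 \<Longrightarrow> g r < g (r + h)"
      using DERIV_pos_inc_right[OF g'] by blast
    obtain d2 where "d2 > 0" and left: "\<And>h. 0 < h \<Longrightarrow> h < d2 \<Longrightarrow> g (r - h) < g r"
      using DERIV_pos_inc_left[OF g'] by blast
    have "\<forall>t\<in>{r - min d1 d2<..<r}. g t < 0" "\<forall>t\<in>{r<..<r + min d1 d2}. g t > 0"
      using left[of "r - _"] right[of "_ - r"] \<open>g r = 0\<close> by auto
    then show ?thesis
      unfolding sign_changes_at_def using \<open>d1 > 0\<close> \<open>d2 > 0\<close> by (intro exI[of _ "min d1 d2"]) auto
  qed
  show ?thesis
  proof (cases "D > 0")
    case True
    then show ?thesis using pos assms by blast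
  next
    case False
    then have "sign_changes_at (\<lambda>t. - f t) r"
      using pos[OF DERIV_minus[OF assms(1)]] assms(2,3) by simp
    then show ?thesis by (simp add: sign_changes_at_uminus)
  qed
qed

lemma sign_changes_at_imp_zero:
  assumes "isCont f r" "sign_changes_at f r"
  shows "f r = 0"
proof (rule ccontr)
  assume "f r \<noteq> 0"
  then have "eventually (\<lambda>t. f t > 0) (at r) \<or> eventually (\<lambda>t. f t < 0) (at r)"
    using assms(1) unfolding isCont_def
    by (metis linorder_neqE_linordered_idom order_tendstoD)
  then obtain d where "d > 0" and same_sign:
      "(\<forall>t. t \<noteq> r \<and> dist t r < d \<longrightarrow> f t > 0) \<or> (\<forall>t. t \<noteq> r \<and> dist t r < d \<longrightarrow> f t < 0)"
    unfolding eventually_at by blast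
  obtain e where "e > 0" and change:
      "((\<forall>t\<in>{r-e<..<r}. f t < 0) \<and> (\<forall>t\<in>{r<..<r+e}. f t > 0))
     \<or> ((\<forall>t\<in>{r-e<..<r}. f t > 0) \<and> (\<forall>t\<in>{r<..<r+e}. f t < 0))"
    using assms(2) unfolding sign_changes_at_def by blast
  define h where "h = min d e / 2"
  have "r - h \<in> {r-e<..<r}" "r + h \<in> {r<..<r+e}" "dist (r - h) r < d" "dist (r + h) r < d"
    using \<open>d > 0\<close> \<open>e > 0\<close> by (auto simp: h_def dist_real_def)
  then show False
    using same_sign change \<open>d > 0\<close> \<open>e > 0\<close>
    by (smt (verit, best) field_sum_of_halves h_def)
qed

lemma sign_changes_at_isolated_zero:
  assumes "sign_changes_at f r"
  shows "\<exists>e>0. \<forall>r'. f r' = 0 \<longrightarrow> dist r' r < e \<longrightarrow> r' = r"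
proof -
  obtain e where "e > 0" and change:
      "((\<forall>t\<in>{r-e<..<r}. f t < 0) \<and> (\<forall>t\<in>{r<..<r+e}. f t > 0))
     \<or> ((\<forall>t\<in>{r-e<..<r}. f t > 0) \<and> (\<forall>t\<in>{r<..<r+e}. f t < 0))"
    using assms unfolding sign_changes_at_def by blast
  have "r' = r" if "f r' = 0" "dist r' r < e" for r'
  proof (rule ccontr)
    assume "r' \<noteq> r"
    then have "r' \<in> {r-e<..<r} \<or> r' \<in> {r<..<r+e}"
      using that(2) by (auto simp: dist_real_def)
    then show False using change that(1) by force
  qed
  then show ?thesis using \<open>e > 0\<close> by blast
qed

lemma periodic_zero_set_infinite:
  fixes f :: "real \<Rightarrow> real"
  assumes "p > 0" "\<And>r. f (r + p) = f r" "f r0 = 0"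
  shows "infinite {r. f r = 0}"
proof -
  have "f (r0 + real n * p) = 0" for n
  proof (induction n)
    case (Suc n)
    have "f (r0 + real (Suc n) * p) = f ((r0 + real n * p) + p)" by (simp add: algebra_simps)
    also have "\<dots> = 0" using Suc assms(2) by simp
    finally show ?case .
  qed (simp add: assms(3))
  then have "range (\<lambda>n. r0 + real n * p) \<subseteq> {r. f r = 0}" by auto
  moreover have "inj (\<lambda>n. r0 + real n * p)"
    using \<open>p > 0\<close> by (auto intro: injI)
  ultimately show ?thesis
    using infinite_UNIV_nat by (meson finite_imageD finite_subset)
qed

locale negative_kappa_directrix =
  fixes \<kappa> u0 :: real and x z \<theta> :: "real \<Rightarrow> real"
  assumes kappa_neg: "\<kappa> < 0" and u0_neg: "u0 < 0"
    and x_deriv: "\<And>s. (x has_real_derivative cos (\<theta> s)) (at s)"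
    and z_deriv: "\<And>s. (z has_real_derivative sin (\<theta> s)) (at s)"
    and theta_deriv: "\<And>s. (\<theta> has_real_derivative \<kappa> * z s) (at s)"
    and x_0: "x 0 = 0" and theta_0: "\<theta> 0 = 0" and z_0: "z 0 = u0"
begin

lemma z_theta_ode: "directrix_ode \<kappa> z \<theta>"
  by (simp add: directrix_ode_def z_deriv theta_deriv)

lemma cos_theta_energy: "cos (\<theta> s) = 1 + \<kappa> / 2 * (u0\<^sup>2 - (z s)\<^sup>2)"
proof -
  define energy where "energy s = cos (\<theta> s) + \<kappa> / 2 * (z s)\<^sup>2" for s
  have "(energy has_real_derivative 0) (at s)" for s
    unfolding energy_def
    by (auto intro!: derivative_eq_intros DERIV_chain2[OF DERIV_cos theta_deriv]
        z_deriv theta_deriv simp: algebra_simps power2_eq_square)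
  then have "energy s = energy 0" by (intro DERIV_isconst_all) auto
  then show ?thesis by (simp add: energy_def theta_0 z_0 algebra_simps)
qed

lemma z_square_le: "(z s)\<^sup>2 \<le> u0\<^sup>2"
proof -
  have "\<kappa> / 2 * (u0\<^sup>2 - (z s)\<^sup>2) \<le> 0"
    using cos_theta_energy[of s] cos_le_one[of "\<theta> s"] by linarith
  then show ?thesis using kappa_neg by (simp add: mult_le_0_iff)
qed

lemma exists_positive_zero:
  assumes cos_pos: "\<And>s. cos (\<theta> s) > 0"
  shows "\<exists>S>0. z S = 0"
proof (rule ccontr)
  assume "\<not> ?thesis"
  then have z_neg: "z s < 0" if "0 \<le> s" for s
    using IVT[of z 0 0 s] DERIV_isCont[OF z_deriv] z_0 u0_neg that
    by (smt (verit, ccfv_threshold))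
  have theta_less: "\<theta> s < pi / 2" if "0 \<le> s" for s
  proof (rule ccontr)
    assume "\<not> \<theta> s < pi / 2"
    then have "\<exists>t\<ge>0. t \<le> s \<and> \<theta> t = pi / 2"
      using IVT[of \<theta> 0 "pi / 2" s] DERIV_isCont[OF theta_deriv] theta_0 that pi_gt_zero by auto
    then show False using cos_pos by (metis cos_pi_half less_irrefl)
  qed
  have theta_increasing: "\<theta> a < \<theta> b" if "0 \<le> a" "a < b" for a b
  proof (rule DERIV_pos_imp_increasing[OF \<open>a < b\<close>])
    fix y assume "a \<le> y" "y \<le> b"
    then have "\<kappa> * z y > 0" using z_neg[of y] kappa_neg that by (simp add: mult_neg_neg)
    then show "\<exists>d. (\<theta> has_real_derivative d) (at y) \<and> d > 0" using theta_deriv by blast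
  qed
  define c where "c = sin (\<theta> 1)"
  have theta_1: "0 < \<theta> 1" using theta_increasing[of 0 1] theta_0 by simp
  have "c > 0" unfolding c_def using theta_1 theta_less[of 1] by (intro sin_gt_zero) auto
  have sin_ge: "c \<le> sin (\<theta> s)" if "1 \<le> s" for s
    unfolding c_def using theta_1 theta_less[of s] theta_increasing[of 1 s] that
    by (cases "s = 1") (auto intro: sin_monotone_2pi_le)
  define s where "s = 1 - z 1 / c"
  have "1 \<le> s" using z_neg[of 1] \<open>c > 0\<close> by (simp add: s_def divide_nonpos_pos)
  have "z 1 + c * (s - 1) \<le> z s"
    by (rule DERIV_ge_imp_linear_lower_bound[OF \<open>1 \<le> s\<close> z_deriv sin_ge])
  moreover have "z 1 + c * (s - 1) = 0" using \<open>c > 0\<close> by (simp add: s_def)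
  ultimately show False using z_neg[of s] \<open>1 \<le> s\<close> by simp
qed

lemma vertical_tangent_not_graph:
  assumes "cos (\<theta> s0) = 0"
  shows "\<not> directrix_graph x z"
proof
  assume "directrix_graph x z"
  then obtain u where z_eq: "z = u \<circ> x" and "u differentiable (at (x s0))"
    unfolding directrix_graph_def by fastforce
  then obtain D where "(u has_real_derivative D) (at (x s0))"
    using real_differentiable_def by blast
  from DERIV_chain[OF this x_deriv] have "(z has_real_derivative 0) (at s0)"
    using assms z_eq by simp
  then have "sin (\<theta> s0) = 0" using DERIV_unique z_deriv by blast
  then show False using assms sin_cos_squared_add[of "\<theta> s0"] by simp
qed

lemma large_u0_not_graph:
  assumes "1 \<le> - \<kappa> / 2 * u0\<^sup>2"
  shows "\<not> directrix_graph x z"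
proof -
  have "\<exists>s. cos (\<theta> s) \<le> 0"
  proof (rule ccontr)
    assume no_nonpos: "\<not> ?thesis"
    then have "\<And>s. cos (\<theta> s) > 0" by (meson not_le)
    then obtain S where "z S = 0" using exists_positive_zero by blast
    then have "cos (\<theta> S) \<le> 0" using cos_theta_energy[of S] assms by simp
    then show False using no_nonpos by blast
  qed
  then obtain s0 where "cos (\<theta> s0) \<le> 0" by blast
  moreover have "isCont (\<lambda>s. cos (\<theta> s)) s" for s
    by (intro continuous_intros DERIV_isCont[OF theta_deriv])
  ultimately have "\<exists>s. cos (\<theta> s) = 0"
    using IVT[of "\<lambda>s. cos (\<theta> s)" s0 0 0] IVT2[of "\<lambda>s. cos (\<theta> s)" s0 0 0] theta_0
    by (cases "s0 \<le> 0") auto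
  then show ?thesis using vertical_tangent_not_graph by blast
qed

end

section \<open>The graph case\<close>

locale graph_directrix = negative_kappa_directrix +
  assumes small_u0: "- \<kappa> / 2 * u0\<^sup>2 < 1"
begin

text \<open>By the energy identity, cos_min is the value of cos \<theta> where z vanishes, and its minimum.\<close>
definition cos_min :: real where "cos_min = 1 + \<kappa> / 2 * u0\<^sup>2"

lemma cos_min_pos: "0 < cos_min"
  using small_u0 by (simp add: cos_min_def)

lemma cos_min_less_1: "cos_min < 1"
  using kappa_neg u0_neg by (simp add: cos_min_def mult_neg_pos)

lemma cos_min_le_cos_theta: "cos_min \<le> cos (\<theta> s)"
proof -
  have "\<kappa> / 2 * (z s)\<^sup>2 \<le> 0" using kappa_neg by (simp add: mult_nonpos_nonneg)
  then show ?thesis using cos_theta_energy[of s] by (simp add: cos_min_def algebra_simps)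
qed

lemma cos_theta_pos: "0 < cos (\<theta> s)"
  using cos_min_le_cos_theta[of s] cos_min_pos by linarith

lemma strict_mono_x: "strict_mono x"
proof (rule strict_monoI)
  show "x a < x b" if "a < b" for a b
    using that by (rule DERIV_pos_imp_increasing[where f = x]) (use x_deriv cos_theta_pos in blast)
qed

lemma x_linear_bounds: "0 \<le> s \<Longrightarrow> cos_min * s \<le> x s" "s \<le> 0 \<Longrightarrow> x s \<le> cos_min * s"
  using DERIV_ge_imp_linear_lower_bound[of 0 s x, OF _ x_deriv cos_min_le_cos_theta]
    DERIV_ge_imp_linear_lower_bound[of s 0 x, OF _ x_deriv cos_min_le_cos_theta]
  by (auto simp: x_0 algebra_simps)

lemma surj_x: "surj x"
proof -
  have "\<exists>s. x s = r" for r
  proof (cases "0 \<le> r")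
    case True
    then have "r \<le> x (r / cos_min)" using x_linear_bounds(1)[of "r / cos_min"] cos_min_pos by simp
    then show ?thesis
      using IVT[of x 0 r "r / cos_min"] True cos_min_pos DERIV_isCont[OF x_deriv] x_0 by auto
  next
    case False
    then have "x (r / cos_min) \<le> r"
      using x_linear_bounds(2)[of "r / cos_min"] cos_min_pos by (simp add: divide_nonpos_pos)
    then show ?thesis
      using IVT[of x "r / cos_min" r 0] False cos_min_pos DERIV_isCont[OF x_deriv] x_0
      by (auto simp: divide_nonpos_pos)
  qed
  then show ?thesis by (metis surjI)
qed

definition x_inv :: "real \<Rightarrow> real" where "x_inv = inv x"

lemma x_x_inv [simp]: "x (x_inv r) = r"
  unfolding x_inv_def using surj_x by (metis surj_f_inv_f)

lemma x_inv_x [simp]: "x_inv (x s) = s"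
  unfolding x_inv_def using strict_mono_x by (metis strict_mono_on_imp_inj_on inv_f_f)

lemma x_inv_deriv: "(x_inv has_real_derivative inverse (cos (\<theta> (x_inv r)))) (at r)"
proof -
  have "isCont x_inv (x (x_inv r))"
    by (rule isCont_inverse_function2[of "x_inv r - 1" "x_inv r" "x_inv r + 1"])
      (auto intro: DERIV_isCont[OF x_deriv])
  then show ?thesis
    using DERIV_inverse_function[of x "cos (\<theta> (x_inv r))" x_inv r "r - 1" "r + 1"]
      x_deriv cos_theta_pos[of "x_inv r"] by auto
qed

definition height :: "real \<Rightarrow> real" where "height r = z (x_inv r)"

lemma height_x [simp]: "height (x s) = z s"
  by (simp add: height_def)

lemma graph_function_eq_height:
  assumes "\<And>s. z s = u (x s)"
  shows "u = height"
proof
  show "u r = height r" for r using assms[of "x_inv r"] by (simp add: height_def)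
qed

lemma height_deriv: "(height has_real_derivative tan (\<theta> (x_inv r))) (at r)"
  using DERIV_chain2[OF z_deriv x_inv_deriv, of r] unfolding height_def
  by (simp add: tan_def divide_inverse)

lemma deriv_height: "deriv height = (\<lambda>r. tan (\<theta> (x_inv r)))"
  using height_deriv DERIV_imp_deriv by blast

lemma is_directrix_graph: "directrix_graph x z"
  unfolding directrix_graph_def
  using strict_mono_x strict_mono_on_imp_inj_on height_x height_deriv real_differentiable_def
  by metis

lemma deriv2_height: "deriv (deriv height) r = \<kappa> * height r / (cos (\<theta> (x_inv r))) ^ 3"
proof -
  have "((\<lambda>r. tan (\<theta> (x_inv r))) has_real_derivative
      inverse ((cos (\<theta> (x_inv r)))\<^sup>2) * (\<kappa> * z (x_inv r) * inverse (cos (\<theta> (x_inv r)))))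
    (at r)"
    using cos_theta_pos[of "x_inv r"]
    by (intro DERIV_chain2[OF DERIV_tan DERIV_chain2[OF theta_deriv x_inv_deriv]]) simp
  then show ?thesis
    by (simp add: deriv_height DERIV_imp_deriv height_def field_simps power3_eq_cube power2_eq_square)
qed

lemma sgn_deriv2_height: "sgn (deriv (deriv height) r) = sgn (- height r)"
  using kappa_neg cos_theta_pos[of "x_inv r"]
  by (simp add: deriv2_height sgn_mult)

lemma height_sign_changes_at_zero:
  assumes "height r = 0"
  shows "sign_changes_at height r"
proof (rule sign_changes_at_DERIV[OF height_deriv _ assms])
  have "cos (\<theta> (x_inv r)) = cos_min"
    using assms cos_theta_energy[of "x_inv r"] by (simp add: height_def cos_min_def)
  moreover have "cos_min\<^sup>2 < 1"
    using cos_min_pos cos_min_less_1 by (simp add: power_less_one_iff abs_less_iff)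
  ultimately have "sin (\<theta> (x_inv r)) \<noteq> 0"
    using sin_squared_eq[of "\<theta> (x_inv r)"] by auto
  then show "tan (\<theta> (x_inv r)) \<noteq> 0"
    using cos_theta_pos[of "x_inv r"] by (simp add: tan_def)
qed

lemma inflection_point_height_iff: "inflection_point height r \<longleftrightarrow> height r = 0"
proof -
  have "inflection_point height r \<longleftrightarrow> sign_changes_at height r"
    unfolding inflection_point_iff_sign_changes_at
    by (simp add: sign_changes_at_sgn_cong[OF sgn_deriv2_height] sign_changes_at_uminus)
  also have "\<dots> \<longleftrightarrow> height r = 0"
    using height_sign_changes_at_zero sign_changes_at_imp_zero DERIV_isCont[OF height_deriv] by blast
  finally show ?thesis .
qed

lemma height_bounds: "u0 \<le> height r \<and> height r \<le> - u0"
  using z_square_le[of "x_inv r"] u0_neg abs_le_square_iff[of "z (x_inv r)" u0]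
  by (simp add: height_def abs_le_iff)

lemma critical_point_height_iff: "critical_point height r \<longleftrightarrow> height r = u0 \<or> height r = - u0"
proof -
  let ?t = "\<theta> (x_inv r)"
  have "critical_point height r \<longleftrightarrow> sin ?t = 0"
    using height_deriv[of r] cos_theta_pos[of "x_inv r"]
    by (auto simp: critical_point_def real_differentiable_def deriv_height tan_def)
  also have "\<dots> \<longleftrightarrow> (cos ?t)\<^sup>2 = 1"
    using sin_squared_eq[of ?t] by (metis eq_iff_diff_eq_0 zero_eq_power2)
  also have "\<dots> \<longleftrightarrow> cos ?t = 1"
    using cos_theta_pos[of "x_inv r"] by (auto simp: power2_eq_1_iff)
  also have "\<dots> \<longleftrightarrow> (z (x_inv r))\<^sup>2 = u0\<^sup>2"
    using cos_theta_energy[of "x_inv r"] kappa_neg by auto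
  also have "\<dots> \<longleftrightarrow> height r = u0 \<or> height r = - u0"
    by (simp add: height_def power2_eq_iff)
  finally show ?thesis .
qed

end

context graph_directrix
begin

lemma first_zero: obtains S where "0 < S" "z S = 0"
  using exists_positive_zero[OF cos_theta_pos] by blast

lemma z_attains_neg_u0: "\<exists>s. z s = - u0"
proof -
  obtain S where "z S = 0" using first_zero by blast
  then show ?thesis using directrix_ode_odd_about_zero[OF z_theta_ode, of S 0] z_0 by auto
qed

lemma z_theta_periodic:
  obtains T where "0 < T" "\<And>s. z (s + T) = z s" "\<And>s. \<theta> (s + T) = \<theta> s"
proof -
  obtain S where "0 < S" "z S = 0" using first_zero by blast
  then have "\<theta> (2 * S) = 0"
    using directrix_ode_odd_about_zero[OF z_theta_ode, of S 0] theta_0 by simp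
  then have "z (4 * S) = z 0" "\<theta> (4 * S) = \<theta> 0"
    using directrix_ode_even_about_vertex[OF z_theta_ode, of "2 * S" 0] theta_0 by simp_all
  then show ?thesis
    using that[of "4 * S"] \<open>0 < S\<close> directrix_ode_periodic[OF z_theta_ode, of "4 * S" 0] by simp
qed

lemma x_add_period:
  assumes "\<And>s. \<theta> (s + T) = \<theta> s"
  shows "x (s + T) = x s + x T"
proof -
  have "((\<lambda>s. x (s + T) - x s) has_real_derivative 0) (at s)" for s
    using DERIV_diff[OF x_deriv[of "s + T", unfolded DERIV_shift] x_deriv[of s]] assms by simp
  then have "x (s + T) - x s = x (0 + T) - x 0" by (intro DERIV_isconst_all) auto
  then show ?thesis using x_0 by simp
qed

lemma height_periodic: "\<exists>p>0. \<forall>r. height (r + p) = height r"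
proof -
  obtain T where "0 < T" and z_per: "\<And>s. z (s + T) = z s" and theta_per: "\<And>s. \<theta> (s + T) = \<theta> s"
    using z_theta_periodic by blast
  have "height (r + x T) = height r" for r
  proof -
    have "height (r + x T) = height (x (x_inv r + T))"
      by (simp add: x_add_period[OF theta_per])
    also have "\<dots> = height r" by (simp add: z_per height_def)
    finally show ?thesis .
  qed
  moreover have "0 < x T" using strict_mono_x \<open>0 < T\<close> x_0 by (metis strict_mono_less)
  ultimately show ?thesis by blast
qed

lemma height_has_zero: "\<exists>r. height r = 0"
  using first_zero height_x by metis

lemma graph_function_properties:
  assumes "\<forall>s. z s = u (x s)"
  shows "(\<exists>T>0. \<forall>r. u (r + T) = u r)
    \<and> infinite {r. u r = 0}
    \<and> (\<forall>r\<in>{r. u r = 0}. \<exists>e>0. \<forall>r'\<in>{r. u r = 0}. dist r' r < e \<longrightarrow> r' = r)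
    \<and> {r. inflection_point u r} = {r. u r = 0}
    \<and> (\<forall>r. u0 \<le> u r \<and> u r \<le> - u0)
    \<and> (\<exists>r. u r = u0) \<and> (\<exists>r. u r = - u0)
    \<and> {r. u r = u0 \<or> u r = - u0} = {r. critical_point u r}"
proof -
  have "u = height" using assms by (intro graph_function_eq_height) simp
  moreover have "\<exists>r. height r = u0" "\<exists>r. height r = - u0"
    using height_x z_0 z_attains_neg_u0 by metis+
  moreover have "infinite {r. height r = 0}"
    using height_periodic height_has_zero periodic_zero_set_infinite by metis
  ultimately show ?thesis
    using height_periodic inflection_point_height_iff height_bounds critical_point_height_iff
      sign_changes_at_isolated_zero[OF height_sign_changes_at_zero]
    by auto
qed

end

context negative_kappa_directrix
begin

lemma directrix_graph_iff_small_u0: "directrix_graph x z \<longleftrightarrow> - \<kappa> / 2 * u0\<^sup>2 < 1"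
proof
  assume "- \<kappa> / 2 * u0\<^sup>2 < 1"
  then interpret graph_directrix \<kappa> u0 x z \<theta> by unfold_locales
  show "directrix_graph x z" by (rule is_directrix_graph)
qed (use large_u0_not_graph in force)

lemma graph_directrix_if_graph: "directrix_graph x z \<Longrightarrow> graph_directrix \<kappa> u0 x z \<theta>"
  by unfold_locales (simp add: directrix_graph_iff_small_u0)

end

theorem mainTheorem17:
  fixes \<kappa> u0 :: real and x z \<theta> :: "real \<Rightarrow> real"
  assumes kneg: "\<kappa> < 0" and u0neg: "u0 < 0"
    and dx: "\<And>s. (x has_real_derivative cos (\<theta> s)) (at s)"
    and dz: "\<And>s. (z has_real_derivative sin (\<theta> s)) (at s)"
    and dth: "\<And>s. (\<theta> has_real_derivative \<kappa> * z s) (at s)"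
    and init: "x 0 = 0" "\<theta> 0 = 0" "z 0 = u0"
  shows "(directrix_graph x z \<longleftrightarrow> - sqrt (2 / - \<kappa>) < u0 \<and> u0 < 0)
    \<and> (directrix_graph x z \<longrightarrow>
         range x = UNIV \<and>
         (\<forall>u. (\<forall>s. z s = u (x s)) \<longrightarrow>
            (\<exists>T>0. \<forall>r. u (r + T) = u r)
          \<and> infinite {r. u r = 0}
          \<and> (\<forall>r\<in>{r. u r = 0}. \<exists>e>0. \<forall>r'\<in>{r. u r = 0}. dist r' r < e \<longrightarrow> r' = r)
          \<and> {r. inflection_point u r} = {r. u r = 0}
          \<and> (\<forall>r. u0 \<le> u r \<and> u r \<le> - u0)
          \<and> (\<exists>r. u r = u0) \<and> (\<exists>r. u r = - u0)
          \<and> {r. u r = u0 \<or> u r = - u0} = {r. critical_point u r}))"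
proof -
  interpret negative_kappa_directrix \<kappa> u0 x z \<theta>
    using assms by unfold_locales
  have "directrix_graph x z \<longleftrightarrow> - sqrt (2 / - \<kappa>) < u0"
    using directrix_graph_iff_small_u0 neg_sqrt_less_iff[of "- \<kappa>" u0] kneg u0neg by simp
  then show ?thesis
    using u0neg graph_directrix.surj_x[OF graph_directrix_if_graph]
      graph_directrix.graph_function_properties[OF graph_directrix_if_graph]
    by blast
qed

end
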